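(* Let $W=W_{Y|X}$ be a BISO channel and $\eta=\eta_{KL}(W)$. Then for every $t\ge0$, $$1-h_2\Big(\tfrac{1-\sqrt\eta}{2}\ast h_2^{-1}\big(\max(1-t,0)\big)\Big)\le F_I(W,t)\le\eta\min\{t,1\}.$$
   Context: A binary-input symmetric-output (BISO) channel is a channel $P_{Y|X}$ with input alphabet $\{0,1\}$ and finite output alphabet $\mathcal Y=\{0,\pm1,\dots,\pm l\}$ for some integer $l\ge 1$ (some transition probabilities may be zero), such that $P_{Y|X}(y|0)=P_{Y|X}(-y|1)$ for all $y$. $\eta_{KL}(P)=\sup_{P_X,Q_X}\frac{D(P\circ P_X\|P\circ Q_X)}{D(P_X\|Q_X)}$ (over inputs with $0<D(P_X\|Q_X)<\infty$, $P\circ P_X$ the output distribution). Logarithms base 2; $h_2(p)=-p\log_2p-(1-p)\log_2(1-p)$, and $h_2^{-1}:[0,1]\to[0,\frac12]$ its inverse on $[0,\frac12]$. Binary convolution: $a\ast b=a(1-b)+(1-a)b$. The best possible data processing function is $F_I(W,t)=\sup\{I(U:Y):I(U:X)\le t,\ U-X-Y\}$, the supremum over all finite-alphabet $U$ and all joint distributions $P_{UX}$ (with $Y$ generated from $X$ by $W$). *)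

theory Defs
  imports Complex_Main
begin

text \<open>Binary input alphabet {0,1} (as naturals); output alphabet {-l,...,l} (as integers).
  A channel is W :: nat => int => real, with W x y = P(Y = y | X = x).\<close>

definition out_alph :: "nat \<Rightarrow> int set" where
  "out_alph l = {- int l .. int l}"

definition BISO :: "nat \<Rightarrow> (nat \<Rightarrow> int \<Rightarrow> real) \<Rightarrow> bool" where
  "BISO l W \<longleftrightarrow> l \<ge> 1
     \<and> (\<forall>x\<in>{0,1}. (\<forall>y\<in>out_alph l. W x y \<ge> 0) \<and> (\<Sum>y\<in>out_alph l. W x y) = 1)
     \<and> (\<forall>y\<in>out_alph l. W 0 y = W 1 (- y))"

definition is_dist :: "'a set \<Rightarrow> ('a \<Rightarrow> real) \<Rightarrow> bool" where
  "is_dist S P \<longleftrightarrow> (\<forall>x\<in>S. P x \<ge> 0) \<and> sum P S = 1"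

definition out_dist :: "(nat \<Rightarrow> int \<Rightarrow> real) \<Rightarrow> (nat \<Rightarrow> real) \<Rightarrow> int \<Rightarrow> real" where
  "out_dist W P y = (\<Sum>x\<in>{0::nat,1}. P x * W x y)"

text \<open>KL divergence (base 2) on a finite set S; the value is meaningful (finite)
  exactly when kl_finite holds (convention 0 log(0/q) = 0).\<close>
definition kl_finite :: "'a set \<Rightarrow> ('a \<Rightarrow> real) \<Rightarrow> ('a \<Rightarrow> real) \<Rightarrow> bool" where
  "kl_finite S P Q \<longleftrightarrow> (\<forall>y\<in>S. Q y = 0 \<longrightarrow> P y = 0)"

definition kl :: "'a set \<Rightarrow> ('a \<Rightarrow> real) \<Rightarrow> ('a \<Rightarrow> real) \<Rightarrow> real" where
  "kl S P Q = (\<Sum>y\<in>S. if P y = 0 then 0 else P y * log 2 (P y / Q y))"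

definition eta_KL :: "nat \<Rightarrow> (nat \<Rightarrow> int \<Rightarrow> real) \<Rightarrow> real" where
  "eta_KL l W = Sup {kl (out_alph l) (out_dist W P) (out_dist W Q) / kl {0,1} P Q | P Q.
       is_dist {0,1} P \<and> is_dist {0,1} Q \<and> kl_finite {0,1} P Q \<and> kl {0,1} P Q > 0}"

definition mut_info :: "'a set \<Rightarrow> 'b set \<Rightarrow> ('a \<Rightarrow> 'b \<Rightarrow> real) \<Rightarrow> real" where
  "mut_info A B J = (\<Sum>a\<in>A. \<Sum>b\<in>B. if J a b = 0 then 0
      else J a b * log 2 (J a b / ((\<Sum>b'\<in>B. J a b') * (\<Sum>a'\<in>A. J a' b))))"

text \<open>Best possible data processing function F_I(W,t). The finite alphabet of U
  is taken, without loss of generality, to be {0..<k} for some k.\<close>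
definition F_I :: "nat \<Rightarrow> (nat \<Rightarrow> int \<Rightarrow> real) \<Rightarrow> real \<Rightarrow> real" where
  "F_I l W t = Sup {mut_info {0..<k} (out_alph l) (\<lambda>u y. \<Sum>x\<in>{0::nat,1}. J u x * W x y) | (k::nat) (J::nat \<Rightarrow> nat \<Rightarrow> real).
       (\<forall>u\<in>{0..<k}. \<forall>x\<in>{0,1}. J u x \<ge> 0)
       \<and> (\<Sum>u\<in>{0..<k}. \<Sum>x\<in>{0::nat,1}. J u x) = 1
       \<and> mut_info {0..<k} {0,1} J \<le> t}"

definition h2 :: "real \<Rightarrow> real" where
  "h2 p = - (if p = 0 then 0 else p * log 2 p) - (if p = 1 then 0 else (1 - p) * log 2 (1 - p))"

definition h2_inv :: "real \<Rightarrow> real" where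
  "h2_inv v = (THE p. p \<in> {0..1/2} \<and> h2 p = v)"

definition bconv :: "real \<Rightarrow> real \<Rightarrow> real" where
  "bconv a b = a * (1 - b) + (1 - a) * b"

end

theory Submission
  imports Defs "HOL-Analysis.Analysis" "HOL-Real_Asymp.Real_Asymp"
begin

text \<open>A BISO channel is a mixture of binary symmetric channels: the output pair \<open>{y, -y}\<close>
  is selected with probability \<open>w\<^sub>y\<close> independently of the input, and on it the channel
  acts as a BSC with crossover \<open>\<beta>\<^sub>y\<close>. For a single BSC,
  \<open>D(P W \<parallel> Q W) \<le> (1 - 2\<beta>)\<^sup>2 D(P \<parallel> Q)\<close> (differentiate in the first argument), so
  \<open>\<eta> \<le> \<Sum>\<^sub>y w\<^sub>y (1 - 2\<beta>\<^sub>y)\<^sup>2\<close>. The upper bound is this strong data processing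
  inequality applied to every conditional law of \<open>X\<close> given \<open>U\<close>, together with
  \<open>I(U;X) \<le> H(X) \<le> 1\<close>.

  For the lower bound let \<open>U\<close> be a uniform bit and \<open>X\<close> its image under a BSC with
  crossover \<open>p\<close>, where \<open>h2 p = max (1 - t) 0\<close>. With \<open>psi s = ln 2 * (1 - h2 ((1 - s) / 2))\<close>,
  \<open>I(U;Y) ln 2 = \<Sum>\<^sub>y w\<^sub>y psi ((1 - 2p)(1 - 2\<beta>\<^sub>y))\<close>. As \<open>u \<mapsto> psi (sqrt u)\<close> is convex,
  Jensen bounds this below by \<open>psi ((1 - 2p) sqrt (\<Sum>\<^sub>y w\<^sub>y (1 - 2\<beta>\<^sub>y)\<^sup>2))\<close>, which is
  at least \<open>psi ((1 - 2p) sqrt \<eta>) = ln 2 * (1 - h2 (\<delta> \<star> p))\<close> for \<open>\<delta> = (1 - sqrt \<eta>) / 2\<close>.\<close>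

section \<open>The function \<open>psi\<close>\<close>

lemma continuous_on_x_ln_x: "continuous_on {0..} (\<lambda>x::real. x * ln x)"
proof (clarsimp simp: continuous_on_eq_continuous_within)
  fix x :: real assume "0 \<le> x"
  show "continuous (at x within {0..}) (\<lambda>x. x * ln x)"
  proof (cases "x = 0")
    case True
    have "((\<lambda>x::real. x * ln x) \<longlongrightarrow> 0) (at_right 0)"
      by real_asymp
    then show ?thesis
      using True by (simp add: continuous_within at_within_Ici_at_right)
  next
    case False
    with \<open>0 \<le> x\<close> have "isCont (\<lambda>x::real. x * ln x) x"
      by (auto intro!: continuous_intros)
    then show ?thesis by (rule continuous_at_imp_continuous_within)
  qed
qed

lemma continuous_on_x_ln_x_compose:
  fixes f :: "'a::topological_space \<Rightarrow> real"
  assumes "continuous_on S f" "\<And>x. x \<in> S \<Longrightarrow> 0 \<le> f x"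
  shows "continuous_on S (\<lambda>x. f x * ln (f x))"
  by (rule continuous_on_compose2[OF continuous_on_x_ln_x assms(1)]) (use assms(2) in auto)

lemma DERIV_sign_change_imp_min:
  fixes f f' :: "real \<Rightarrow> real"
  assumes cont: "continuous_on {lo..hi} f"
    and deriv: "\<And>x. lo < x \<Longrightarrow> x < hi \<Longrightarrow> (f has_real_derivative f' x) (at x)"
    and left: "\<And>x. lo < x \<Longrightarrow> x < m \<Longrightarrow> f' x \<le> 0"
    and right: "\<And>x. m < x \<Longrightarrow> x < hi \<Longrightarrow> 0 \<le> f' x"
    and bounds: "lo \<le> a" "a \<le> hi" "lo \<le> m" "m \<le> hi"
  shows "f m \<le> f a"
proof (cases "a \<le> m")
  case True
  show ?thesis
  proof (rule DERIV_nonpos_imp_decreasing_open[OF True])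
    fix x assume x: "a < x" "x < m"
    with bounds have "lo < x" "x < hi"
      by linarith+
    with x deriv left show "\<exists>y. (f has_real_derivative y) (at x) \<and> y \<le> 0"
      by blast
  qed (rule continuous_on_subset[OF cont], use bounds in auto)
next
  case False
  show ?thesis
  proof (rule DERIV_nonneg_imp_increasing_open[of m a])
    fix x assume x: "m < x" "x < a"
    with bounds have "lo < x" "x < hi"
      by linarith+
    with x deriv right show "\<exists>y. (f has_real_derivative y) (at x) \<and> 0 \<le> y"
      by blast
  qed (use False in simp, rule continuous_on_subset[OF cont], use bounds in auto)
qed

text \<open>The divergence, in nats, of \<open>((1 + s)/2, (1 - s)/2)\<close> from the uniform distribution.\<close>

definition psi :: "real \<Rightarrow> real" where
  "psi s = ((1 + s) * ln (1 + s) + (1 - s) * ln (1 - s)) / 2"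

definition psi' :: "real \<Rightarrow> real" where
  "psi' s = (ln (1 + s) - ln (1 - s)) / 2"

lemma has_real_derivative_psi: "-1 < s \<Longrightarrow> s < 1 \<Longrightarrow> (psi has_real_derivative psi' s) (at s)"
  unfolding psi_def psi'_def
  by (rule derivative_eq_intros refl | simp)+

lemma has_real_derivative_psi': "-1 < s \<Longrightarrow> s < 1 \<Longrightarrow> (psi' has_real_derivative 1 / (1 - s\<^sup>2)) (at s)"
  unfolding psi'_def
  by (rule derivative_eq_intros refl | simp)+ (simp add: field_simps power2_eq_square)

lemma continuous_on_psi: "continuous_on {-1..1} psi"
  unfolding psi_def
  by (intro continuous_intros continuous_on_x_ln_x_compose) auto

lemma psi_0 [simp]: "psi 0 = 0" and psi'_0 [simp]: "psi' 0 = 0"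
  by (simp_all add: psi_def psi'_def)

lemma psi_1: "psi 1 = ln 2"
  by (simp add: psi_def)

lemma psi_minus: "psi (- s) = psi s"
  by (simp add: psi_def algebra_simps)

lemma psi_abs: "psi \<bar>s\<bar> = psi s"
  by (cases "s \<ge> 0") (auto simp: psi_minus)

lemma psi'_pos: "0 < s \<Longrightarrow> s < 1 \<Longrightarrow> 0 < psi' s"
  unfolding psi'_def by simp

lemma convex_on_psi': "convex_on {0..<1} psi'"
proof (rule convex_on_realI[where f' = "\<lambda>s. 1 / (1 - s\<^sup>2)"])
  fix x y :: real assume "x \<in> {0..<1}" "y \<in> {0..<1}" "x \<le> y"
  then have "x\<^sup>2 \<le> y\<^sup>2" "y\<^sup>2 < 1"
    by (auto intro: power_mono simp: abs_square_less_1)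
  then show "1 / (1 - x\<^sup>2) \<le> 1 / (1 - y\<^sup>2)"
    by (intro divide_left_mono) auto
qed (auto intro: has_real_derivative_psi')

text \<open>Convexity and \<open>psi' 0 = 0\<close> make \<open>psi' s / s\<close> nondecreasing.\<close>

lemma psi'_ratio_mono:
  assumes "0 \<le> s" "s \<le> r" "r < 1" "0 < r"
  shows "r * psi' s \<le> s * psi' r"
proof -
  have "psi' ((1 - s/r) *\<^sub>R 0 + (s/r) *\<^sub>R r) \<le> (1 - s/r) * psi' 0 + (s/r) * psi' r"
    by (rule convex_onD[OF convex_on_psi']) (use assms in auto)
  with assms show ?thesis
    by (simp add: field_simps)
qed

lemma psi_strict_mono:
  assumes "0 \<le> a" "a < b" "b \<le> 1"
  shows "psi a < psi b"
proof (rule DERIV_pos_imp_increasing_open[OF assms(2)])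
  fix x assume "a < x" "x < b"
  with assms show "\<exists>y. (psi has_real_derivative y) (at x) \<and> 0 < y"
    by (intro exI[of _ "psi' x"]) (auto intro!: has_real_derivative_psi psi'_pos)
qed (rule continuous_on_subset[OF continuous_on_psi], use assms in auto)

lemma psi_mono: "0 \<le> a \<Longrightarrow> a \<le> b \<Longrightarrow> b \<le> 1 \<Longrightarrow> psi a \<le> psi b"
  using psi_strict_mono[of a b] by (cases "a = b") auto

lemma psi_nonneg: "0 \<le> s \<Longrightarrow> s \<le> 1 \<Longrightarrow> 0 \<le> psi s"
  using psi_mono[of 0 s] by simp

text \<open>The tangent of \<open>u \<mapsto> psi (sqrt u)\<close> at \<open>r\<^sup>2\<close> lies below it; this is
  exactly the monotonicity of \<open>psi' s / s\<close>.\<close>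

lemma psi_ge_tangent_sq:
  assumes r: "0 < r" "r < 1" and s: "0 \<le> s" "s \<le> 1"
  shows "psi r + psi' r / (2 * r) * (s\<^sup>2 - r\<^sup>2) \<le> psi s"
proof -
  define g where "g x = psi x - psi' r / (2 * r) * x\<^sup>2" for x
  have "g r \<le> g s"
  proof (rule DERIV_sign_change_imp_min
      [where f = g and f' = "\<lambda>x. psi' x - x * psi' r / r" and lo = 0 and hi = 1])
    show "continuous_on {0..1} g"
      unfolding g_def by (intro continuous_intros continuous_on_subset[OF continuous_on_psi]) auto
    show "(g has_real_derivative psi' x - x * psi' r / r) (at x)" if "0 < x" "x < 1" for x
      unfolding g_def using that r
      by (auto intro!: derivative_eq_intros has_real_derivative_psi simp: field_simps)
    show "psi' x - x * psi' r / r \<le> 0" if "0 < x" "x < r" for x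
      using psi'_ratio_mono[of x r] that r by (simp add: field_simps)
    show "0 \<le> psi' x - x * psi' r / r" if "r < x" "x < 1" for x
      using psi'_ratio_mono[of r x] that r by (simp add: field_simps)
  qed (use r s in auto)
  then show ?thesis
    by (simp add: g_def algebra_simps)
qed

lemma convex_on_psi_sqrt: "convex_on {0..1} (\<lambda>u. psi (sqrt u))"
proof (rule convex_onI)
  show "convex {0..(1::real)}" by simp
  fix t x y :: real assume t: "0 < t" "t < 1" and xy: "x \<in> {0..1}" "y \<in> {0..1}"
  define m where "m = (1 - t) * x + t * y"
  have m01: "0 \<le> m" "m \<le> 1"
    using t xy unfolding m_def by (auto intro!: convex_bound_le)
  consider "m = 0" | "m = 1" | "0 < m \<and> m < 1"
    using m01 by linarith
  then show "psi (sqrt ((1 - t) *\<^sub>R x + t *\<^sub>R y)) \<le> (1 - t) * psi (sqrt x) + t * psi (sqrt y)"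
  proof cases
    case 1
    have "0 \<le> (1 - t) * x" "0 \<le> t * y"
      using t xy by auto
    with 1 have "(1 - t) * x = 0" "t * y = 0"
      unfolding m_def by linarith+
    with t have "x = 0" "y = 0" by auto
    then show ?thesis by simp
  next
    case 2
    have "(1 - t) * x \<le> 1 - t" "t * y \<le> t"
      using t xy by (auto simp: mult_le_cancel_left1)
    then have "(1 - t) * x = 1 - t" "t * y = t"
      using 2 unfolding m_def by linarith+
    with t have "x = 1" "y = 1" by auto
    then show ?thesis by (simp add: algebra_simps)
  next
    case 3
    define k where "k = psi' (sqrt m) / (2 * sqrt m)"
    have "psi (sqrt m) + k * (x - m) \<le> psi (sqrt x)" "psi (sqrt m) + k * (y - m) \<le> psi (sqrt y)"
      using psi_ge_tangent_sq[of "sqrt m" "sqrt x"] psi_ge_tangent_sq[of "sqrt m" "sqrt y"] 3 xy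
      unfolding k_def by auto
    then have "(1 - t) * (psi (sqrt m) + k * (x - m)) + t * (psi (sqrt m) + k * (y - m))
        \<le> (1 - t) * psi (sqrt x) + t * psi (sqrt y)"
      using t by (intro add_mono mult_left_mono) auto
    moreover have "(1 - t) * (psi (sqrt m) + k * (x - m)) + t * (psi (sqrt m) + k * (y - m))
        = psi (sqrt m)"
      unfolding m_def by (simp add: algebra_simps)
    ultimately show ?thesis by (simp add: m_def)
  qed
qed


section \<open>Binary divergence and the binary symmetric channel\<close>

lemma one_minus_2_bconv: "1 - 2 * bconv a b = (1 - 2 * a) * (1 - 2 * b)"
  by (simp add: bconv_def algebra_simps)

lemma bconv_one_minus: "bconv a (1 - b) = 1 - bconv a b"
  by (simp add: bconv_def algebra_simps)

lemma bconv_bounds: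
  assumes "0 \<le> a" "a \<le> 1" "0 \<le> b" "b \<le> 1"
  shows "0 \<le> bconv a b" "bconv a b \<le> 1"
proof -
  show "0 \<le> bconv a b"
    unfolding bconv_def using assms by simp
  have "a * (1 - b) + (1 - a) * b \<le> a * 1 + (1 - a) * 1"
    using assms by (intro add_mono mult_left_mono) auto
  then show "bconv a b \<le> 1"
    by (simp add: bconv_def)
qed

lemma bconv_strict_bounds:
  assumes "0 < a" "a < 1" "0 \<le> b" "b \<le> 1"
  shows "0 < bconv a b" "bconv a b < 1"
proof -
  have "0 < a * (1 - b) \<or> 0 < (1 - a) * b" "0 < a * b \<or> 0 < (1 - a) * (1 - b)"
    using assms by (cases "b = 0"; cases "b = 1"; simp)+
  moreover have "0 \<le> a * (1 - b)" "0 \<le> (1 - a) * b" "0 \<le> a * b" "0 \<le> (1 - a) * (1 - b)"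
    using assms by simp_all
  moreover have "1 - bconv a b = a * b + (1 - a) * (1 - b)"
    by (simp add: bconv_def algebra_simps)
  ultimately show "0 < bconv a b" "bconv a b < 1"
    unfolding bconv_def by linarith+
qed

text \<open>Since \<open>ln 0 = 0\<close> in Isabelle, the convention
  \<open>0 ln 0 = 0\<close> is built in; the value is meaningful when \<open>b = 0 \<Longrightarrow> a = 0\<close> and
  \<open>b = 1 \<Longrightarrow> a = 1\<close>.\<close>

definition bin_kl :: "real \<Rightarrow> real \<Rightarrow> real" where
  "bin_kl a b = a * ln (a / b) + (1 - a) * ln ((1 - a) / (1 - b))"

definition logit :: "real \<Rightarrow> real" where
  "logit x = ln x - ln (1 - x)"

lemma bin_kl_self [simp]: "bin_kl a a = 0"
  unfolding bin_kl_def by (cases "a = 0"; cases "a = 1") auto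

lemma bin_kl_one_minus: "bin_kl (1 - a) (1 - b) = bin_kl a b"
  unfolding bin_kl_def by simp

lemma bin_kl_expand:
  assumes "0 \<le> a" "a \<le> 1" "0 < b" "b < 1"
  shows "bin_kl a b = a * ln a + (1 - a) * ln (1 - a) - a * ln b - (1 - a) * ln (1 - b)"
  unfolding bin_kl_def using assms
  by (cases "a = 0"; cases "a = 1") (auto simp: ln_div algebra_simps)

lemma bin_kl_nonneg:
  assumes "0 \<le> a" "a \<le> 1" "0 \<le> b" "b \<le> 1" "b = 0 \<Longrightarrow> a = 0" "b = 1 \<Longrightarrow> a = 1"
  shows "0 \<le> bin_kl a b"
proof -
  have ln_bound: "x - y \<le> x * ln (x / y)" if "0 \<le> x" "0 \<le> y" "y = 0 \<Longrightarrow> x = 0" for x y :: real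
  proof (cases "x = 0")
    case False
    with that have xy: "0 < x" "0 < y" by force+
    then have "x * ln (y / x) \<le> x * (y / x - 1)"
      by (intro mult_left_mono ln_le_minus_one) auto
    moreover have "ln (x / y) = - ln (y / x)" "x * (y / x - 1) = y - x"
      using xy by (simp_all add: ln_div field_simps)
    ultimately show ?thesis
      by simp
  qed (use that in simp)
  have "a - b \<le> a * ln (a / b)" "(1 - a) - (1 - b) \<le> (1 - a) * ln ((1 - a) / (1 - b))"
    using assms by (intro ln_bound; auto)+
  then show ?thesis
    unfolding bin_kl_def by simp
qed

lemma continuous_on_bin_kl:
  assumes "0 < b" "b < 1"
  shows "continuous_on {0..1} (\<lambda>a. bin_kl a b)"
proof -
  have "continuous_on {0..1}
      (\<lambda>a. a * ln a + (1 - a) * ln (1 - a) - a * ln b - (1 - a) * ln (1 - b))"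
    by (intro continuous_intros continuous_on_x_ln_x_compose) auto
  then show ?thesis
    by (rule continuous_on_cong[THEN iffD1, rotated 2]) (use assms bin_kl_expand in auto)
qed

lemma has_real_derivative_logit:
  "0 < x \<Longrightarrow> x < 1 \<Longrightarrow> (logit has_real_derivative 1 / (x * (1 - x))) (at x)"
  unfolding logit_def
  by (rule derivative_eq_intros refl | simp)+ (simp add: field_simps)

lemma has_real_derivative_bin_kl:
  assumes "0 < a" "a < 1" "0 < b" "b < 1"
  shows "((\<lambda>a. bin_kl a b) has_real_derivative logit a - logit b) (at a)"
proof (rule has_field_derivative_transform_within_open[where S = "{0<..<1}"])
  show "((\<lambda>a. a * ln a + (1 - a) * ln (1 - a) - a * ln b - (1 - a) * ln (1 - b))
      has_real_derivative logit a - logit b) (at a)"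
    unfolding logit_def by (insert assms) (rule derivative_eq_intros refl | simp)+
qed (use assms bin_kl_expand[symmetric, of _ b] in auto)


lemma has_real_derivative_bconv: "((\<lambda>x. bconv x \<beta>) has_real_derivative 1 - 2 * \<beta>) (at x)"
  unfolding bconv_def by (auto intro!: derivative_eq_intros)

text \<open>The channel pulls its input towards \<open>1/2\<close>, where \<open>z (1 - z)\<close> is largest.\<close>

lemma mult_one_minus_le_bconv:
  assumes "0 \<le> \<beta>" "\<beta> \<le> 1"
  shows "z * (1 - z) \<le> bconv z \<beta> * (1 - bconv z \<beta>)"
proof -
  have "4 * (w * (1 - w)) = 1 - (1 - 2 * w)\<^sup>2" for w :: real
    by (simp add: power2_eq_square algebra_simps)
  moreover have "(1 - 2 * bconv z \<beta>)\<^sup>2 \<le> (1 - 2 * z)\<^sup>2"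
    unfolding one_minus_2_bconv power_mult_distrib using assms
    by (intro mult_left_le) (auto simp: abs_square_le_1)
  ultimately show ?thesis
    by (metis diff_left_mono mult_le_cancel_left_pos zero_less_numeral)
qed

lemma logit_bconv_diff_antimono:
  assumes \<beta>: "0 \<le> \<beta>" "\<beta> \<le> 1/2" and xy: "0 < x" "x \<le> y" "y < 1"
  shows "logit (bconv y \<beta>) - (1 - 2 * \<beta>) * logit y \<le> logit (bconv x \<beta>) - (1 - 2 * \<beta>) * logit x"
proof -
  define c where "c = 1 - 2 * \<beta>"
  define H where "H z = logit (bconv z \<beta>) - c * logit z" for z
  have H_deriv:
      "(H has_real_derivative c / (bconv z \<beta> * (1 - bconv z \<beta>)) - c / (z * (1 - z))) (at z)"
    if "0 < z" "z < 1" for z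
    unfolding H_def c_def using bconv_strict_bounds[of z \<beta>] that \<beta>
    by (auto intro!: derivative_eq_intros DERIV_chain2[OF has_real_derivative_logit]
        has_real_derivative_logit has_real_derivative_bconv)
  have H_deriv_nonpos: "c / (bconv z \<beta> * (1 - bconv z \<beta>)) - c / (z * (1 - z)) \<le> 0"
    if "0 < z" "z < 1" for z
  proof -
    have "0 < z * (1 - z)" "z * (1 - z) \<le> bconv z \<beta> * (1 - bconv z \<beta>)"
      using that \<beta> mult_one_minus_le_bconv by auto
    moreover have "0 \<le> c"
      using \<beta> by (simp add: c_def)
    ultimately have "c * (1 / (bconv z \<beta> * (1 - bconv z \<beta>))) \<le> c * (1 / (z * (1 - z)))"
      by (intro mult_left_mono divide_left_mono) auto
    then show ?thesis
      by simp
  qed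
  have "H y \<le> H x"
  proof (rule DERIV_nonpos_imp_decreasing_open[OF xy(2)])
    fix z assume "x < z" "z < y"
    with xy show "\<exists>d. (H has_real_derivative d) (at z) \<and> d \<le> 0"
      using H_deriv H_deriv_nonpos by force
  next
    show "continuous_on {x..y} H"
      using xy by (intro continuous_at_imp_continuous_on ballI DERIV_isCont[OF H_deriv]) auto
  qed
  then show ?thesis
    by (simp add: H_def c_def)
qed

lemma bin_kl_bconv_le_half:
  assumes \<beta>: "0 \<le> \<beta>" "\<beta> \<le> 1/2" and a: "0 \<le> a" "a \<le> 1" and b: "0 < b" "b < 1"
  shows "bin_kl (bconv a \<beta>) (bconv b \<beta>) \<le> (1 - 2 * \<beta>)\<^sup>2 * bin_kl a b"
proof -
  define c where "c = 1 - 2 * \<beta>"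
  define H where "H z = logit (bconv z \<beta>) - c * logit z" for z
  define G where "G x = c\<^sup>2 * bin_kl x b - bin_kl (bconv x \<beta>) (bconv b \<beta>)" for x
  have \<beta>b: "0 < bconv b \<beta>" "bconv b \<beta> < 1"
    using bconv_strict_bounds b \<beta> by auto
  have "G b \<le> G a"
  proof (rule DERIV_sign_change_imp_min
      [where f = G and f' = "\<lambda>x. - c * (H x - H b)" and lo = 0 and hi = 1])
    have "continuous_on {0..1} (\<lambda>x. bin_kl (bconv x \<beta>) (bconv b \<beta>))"
      using bconv_bounds \<beta> \<beta>b unfolding bconv_def
      by (intro continuous_on_compose2[OF continuous_on_bin_kl]) (auto intro!: continuous_intros)
    then show "continuous_on {0..1} G"
      unfolding G_def using b by (intro continuous_intros continuous_on_bin_kl)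
    show "(G has_real_derivative - c * (H x - H b)) (at x)" if "0 < x" "x < 1" for x
    proof -
      have "(G has_real_derivative c\<^sup>2 * (logit x - logit b)
          - (logit (bconv x \<beta>) - logit (bconv b \<beta>)) * c) (at x)"
        unfolding G_def c_def using that b \<beta> \<beta>b bconv_strict_bounds[of x \<beta>]
        by (auto intro!: derivative_eq_intros has_real_derivative_bin_kl
            DERIV_chain2[OF has_real_derivative_bin_kl] has_real_derivative_bconv)
      then show ?thesis
        by (simp add: H_def power2_eq_square algebra_simps)
    qed
    have "0 \<le> c"
      using \<beta> by (simp add: c_def)
    have H_antimono: "H z \<le> H x" if "0 < x" "x \<le> z" "z < 1" for x z
      using logit_bconv_diff_antimono[of \<beta> x z] \<beta> that by (simp add: H_def c_def)
    show "- c * (H x - H b) \<le> 0" if "0 < x" "x < b" for x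
      using H_antimono[of x b] \<open>0 \<le> c\<close> b that by (simp add: mult_nonneg_nonneg)
    show "0 \<le> - c * (H x - H b)" if "b < x" "x < 1" for x
      using H_antimono[of b x] \<open>0 \<le> c\<close> b that by (simp add: mult_nonneg_nonpos)
  qed (use a b in auto)
  then show ?thesis
    by (simp add: G_def c_def)
qed

text \<open>The case \<open>\<beta> > 1/2\<close> reduces to \<open>1 - \<beta>\<close> by relabelling the output.\<close>

lemma bin_kl_bconv_le:
  assumes a: "0 \<le> a" "a \<le> 1" and b: "0 \<le> b" "b \<le> 1" and \<beta>: "0 \<le> \<beta>" "\<beta> \<le> 1"
    and abs_cont: "b = 0 \<Longrightarrow> a = 0" "b = 1 \<Longrightarrow> a = 1"
  shows "bin_kl (bconv a \<beta>) (bconv b \<beta>) \<le> (1 - 2 * \<beta>)\<^sup>2 * bin_kl a b"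
proof (cases "a = b")
  case False
  then have b': "0 < b" "b < 1"
    using b abs_cont by (auto simp: less_le)
  show ?thesis
  proof (cases "\<beta> \<le> 1/2")
    case True
    then show ?thesis
      using bin_kl_bconv_le_half \<beta> a b' by blast
  next
    case False
    then have "bin_kl (bconv a (1 - \<beta>)) (bconv b (1 - \<beta>)) \<le> (1 - 2 * (1 - \<beta>))\<^sup>2 * bin_kl a b"
      using \<beta> a b' by (intro bin_kl_bconv_le_half) auto
    moreover have "(1 - 2 * (1 - \<beta>))\<^sup>2 = (1 - 2 * \<beta>)\<^sup>2"
      by (simp add: power2_eq_square algebra_simps)
    ultimately show ?thesis
      by (simp add: bconv_one_minus bin_kl_one_minus)
  qed
qed simp


lemma bin_kl_half: "0 \<le> z \<Longrightarrow> z \<le> 1 \<Longrightarrow> bin_kl z (1/2) = psi (1 - 2 * z)"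
  unfolding bin_kl_def psi_def by (simp add: field_simps)

lemma h2_eq_psi:
  assumes "0 \<le> z" "z \<le> 1"
  shows "h2 z = 1 - psi (1 - 2 * z) / ln 2"
proof -
  have "psi (1 - 2 * z) = bin_kl z (1/2)"
    using assms by (simp add: bin_kl_half)
  also have "\<dots> = ln 2 + z * ln z + (1 - z) * ln (1 - z)"
    using assms by (simp add: bin_kl_expand ln_div algebra_simps)
  finally have "psi (1 - 2 * z) = ln 2 + z * ln z + (1 - z) * ln (1 - z)" .
  moreover have "h2 z = - (z * ln z + (1 - z) * ln (1 - z)) / ln 2"
    unfolding h2_def log_def by (auto simp: field_simps)
  ultimately show ?thesis
    by (simp add: field_simps)
qed

lemma h2_le_1: "0 \<le> z \<Longrightarrow> z \<le> 1 \<Longrightarrow> h2 z \<le> 1"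
  by (simp add: h2_eq_psi psi_abs[of "1 - 2 * z", symmetric] psi_nonneg)

lemma h2_strict_mono: "0 \<le> x \<Longrightarrow> x < y \<Longrightarrow> y \<le> 1/2 \<Longrightarrow> h2 x < h2 y"
  by (simp add: h2_eq_psi psi_strict_mono divide_strict_right_mono)

lemma h2_inv_correct:
  assumes "0 \<le> v" "v \<le> 1"
  shows "h2_inv v \<in> {0..1/2}" "h2 (h2_inv v) = v"
proof -
  obtain s where s: "0 \<le> s" "s \<le> 1" "psi s = (1 - v) * ln 2"
    using IVT'[of psi 0 "(1 - v) * ln 2" 1] assms psi_1
      continuous_on_subset[OF continuous_on_psi, of "{0..1}"] by auto
  define p where "p = (1 - s) / 2"
  have "1 - 2 * p = s"
    by (simp add: p_def field_simps)
  then have p: "p \<in> {0..1/2}" "h2 p = v"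
    using s by (auto simp: p_def h2_eq_psi)
  have "h2_inv v = p"
    unfolding h2_inv_def
  proof (rule the_equality)
    fix x assume x: "x \<in> {0..1/2} \<and> h2 x = v"
    show "x = p"
      using h2_strict_mono[of x p] h2_strict_mono[of p x] x p
      by (cases x p rule: linorder_cases) auto
  qed (use p in simp)
  with p show "h2_inv v \<in> {0..1/2}" "h2 (h2_inv v) = v"
    by simp_all
qed

lemma one_minus_h2_bconv:
  assumes "0 \<le> s" "s \<le> 1" "0 \<le> p" "p \<le> 1"
  shows "1 - h2 (bconv ((1 - s) / 2) p) = psi (s * (1 - 2 * p)) / ln 2"
proof -
  have "0 \<le> bconv ((1 - s) / 2) p" "bconv ((1 - s) / 2) p \<le> 1"
    using assms by (intro bconv_bounds; simp)+
  moreover have "1 - 2 * ((1 - s) / 2) = s"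
    by (simp add: field_simps)
  ultimately show ?thesis
    by (simp only: h2_eq_psi one_minus_2_bconv)
qed


section \<open>BISO channels\<close>

lemma sum_out_alph:
  "(\<Sum>y\<in>out_alph l. f y) = f 0 + (\<Sum>y\<in>{1..int l}. f y + f (- y))"
proof -
  have split: "out_alph l = insert 0 ({1..int l} \<union> uminus ` {1..int l})"
  proof (intro set_eqI iffI)
    fix y assume "y \<in> out_alph l"
    then show "y \<in> insert 0 ({1..int l} \<union> uminus ` {1..int l})"
      by (cases "y < 0") (auto simp: out_alph_def intro: rev_image_eqI[of "- y"])
  qed (auto simp: out_alph_def)
  have "sum f (out_alph l) = f 0 + (sum f {1..int l} + sum f (uminus ` {1..int l}))"
    unfolding split by (subst sum.insert, simp, force) (subst sum.union_disjoint; auto)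
  also have "sum f (uminus ` {1..int l}) = (\<Sum>y\<in>{1..int l}. f (- y))"
    by (subst sum.reindex) (auto simp: inj_on_def)
  finally show ?thesis
    by (simp add: sum.distrib)
qed

lemma out_alph_memI:
  "0 \<in> out_alph l" "y \<in> {1..int l} \<Longrightarrow> y \<in> out_alph l" "y \<in> {1..int l} \<Longrightarrow> - y \<in> out_alph l"
  by (auto simp: out_alph_def)

lemma BISO_D:
  assumes "BISO l W"
  shows BISO_nonneg: "\<And>x y. x \<in> {0, 1} \<Longrightarrow> y \<in> out_alph l \<Longrightarrow> 0 \<le> W x y"
    and BISO_sum: "\<And>x. x \<in> {0, 1} \<Longrightarrow> (\<Sum>y\<in>out_alph l. W x y) = 1"
    and BISO_symmetric: "\<And>y. y \<in> out_alph l \<Longrightarrow> W 1 y = W 0 (- y)"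
proof -
  fix y :: int assume "y \<in> out_alph l"
  moreover from this have "- y \<in> out_alph l"
    by (auto simp: out_alph_def)
  ultimately show "W 1 y = W 0 (- y)"
    using assms unfolding BISO_def by force
qed (use assms in \<open>auto simp: BISO_def\<close>)

lemma is_dist_binaryD:
  fixes P :: "nat \<Rightarrow> real"
  assumes "is_dist {0, 1} P"
  shows "P 1 = 1 - P 0" "0 \<le> P 0" "P 0 \<le> 1"
  using assms unfolding is_dist_def by auto

lemma out_dist_binary: "out_dist W P y = P 0 * W 0 y + P 1 * W 1 y"
  by (simp add: out_dist_def)

lemma kl_binary:
  fixes P Q :: "nat \<Rightarrow> real"
  assumes "P 1 = 1 - P 0" "Q 1 = 1 - Q 0"
  shows "kl {0, 1} P Q = bin_kl (P 0) (Q 0) / ln 2"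
  unfolding kl_def bin_kl_def log_def using assms by (simp add: add_divide_distrib)

lemma kl_point_mass_uniform:
  defines "P \<equiv> \<lambda>x::nat. if x = 0 then 1 else 0" and "Q \<equiv> \<lambda>x::nat. 1 / 2"
  shows "is_dist {0, 1} P" "is_dist {0, 1} Q" "kl_finite {0, 1} P Q" "kl {0, 1} P Q = 1"
proof -
  show "is_dist {0, 1} P" "is_dist {0, 1} Q" "kl_finite {0, 1} P Q"
    by (auto simp: is_dist_def kl_finite_def P_def Q_def)
  have "kl {0, 1} P Q = bin_kl 1 (1/2) / ln 2"
    by (subst kl_binary) (auto simp: P_def Q_def)
  then show "kl {0, 1} P Q = 1"
    by (simp add: bin_kl_def)
qed

lemma kl_binary_nonneg:
  fixes P Q :: "nat \<Rightarrow> real"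
  assumes P: "is_dist {0, 1} P" and Q: "is_dist {0, 1} Q" and abs_cont: "kl_finite {0, 1} P Q"
  shows "0 \<le> kl {0, 1} P Q"
proof -
  note p = is_dist_binaryD[OF P] and q = is_dist_binaryD[OF Q]
  have "0 \<le> bin_kl (P 0) (Q 0)"
    using p q abs_cont by (intro bin_kl_nonneg) (auto simp: kl_finite_def)
  then show ?thesis
    unfolding kl_binary[OF p(1) q(1)] by simp
qed

text \<open>The weights \<open>w\<^sub>y\<close> and crossovers \<open>\<beta>\<^sub>y\<close> of the BSC mixture, for \<open>y \<ge> 1\<close>; the output
  \<open>0\<close> is an erasure. If \<open>pair_weight W y = 0\<close>, then \<open>crossover W y = 0\<close> by \<open>x / 0 = 0\<close>,
  which is harmless since that pair is never observed.\<close>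

definition pair_weight :: "(nat \<Rightarrow> int \<Rightarrow> real) \<Rightarrow> int \<Rightarrow> real" where
  "pair_weight W y = W 0 y + W 0 (- y)"

definition crossover :: "(nat \<Rightarrow> int \<Rightarrow> real) \<Rightarrow> int \<Rightarrow> real" where
  "crossover W y = W 0 (- y) / pair_weight W y"

definition eta_bound :: "nat \<Rightarrow> (nat \<Rightarrow> int \<Rightarrow> real) \<Rightarrow> real" where
  "eta_bound l W = (\<Sum>y\<in>{1..int l}. pair_weight W y * (1 - 2 * crossover W y)\<^sup>2)"

context
  fixes l :: nat and W :: "nat \<Rightarrow> int \<Rightarrow> real"
  assumes BISO: "BISO l W"
begin

lemma pair_weight_nonneg: "y \<in> {1..int l} \<Longrightarrow> 0 \<le> pair_weight W y"
  using BISO_nonneg[OF BISO] out_alph_memI by (simp add: pair_weight_def)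

lemma crossover_bounds:
  assumes "y \<in> {1..int l}"
  shows "0 \<le> crossover W y" "crossover W y \<le> 1"
proof -
  have "0 \<le> W 0 y" "0 \<le> W 0 (- y)"
    using BISO_nonneg[OF BISO, of 0] out_alph_memI(2,3)[OF assms] by auto
  then show "0 \<le> crossover W y" "crossover W y \<le> 1"
    by (auto simp: crossover_def pair_weight_def divide_le_eq_1)
qed

lemma abs_one_minus_2_crossover_le: "y \<in> {1..int l} \<Longrightarrow> \<bar>1 - 2 * crossover W y\<bar> \<le> 1"
  using crossover_bounds by force

lemma sum_pair_weight: "(\<Sum>y\<in>{1..int l}. pair_weight W y) = 1 - W 0 0"
  using sum_out_alph[of "W 0" l] BISO_sum[OF BISO, of 0] by (simp add: pair_weight_def)

lemma eta_bound_bounds: "0 \<le> eta_bound l W" "eta_bound l W \<le> 1"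
proof -
  show "0 \<le> eta_bound l W"
    unfolding eta_bound_def using pair_weight_nonneg by (intro sum_nonneg) auto
  have "(1 - 2 * crossover W y)\<^sup>2 \<le> 1" if "y \<in> {1..int l}" for y
    using abs_one_minus_2_crossover_le[OF that] by (simp add: abs_square_le_1)
  then have "eta_bound l W \<le> (\<Sum>y\<in>{1..int l}. pair_weight W y)"
    unfolding eta_bound_def using pair_weight_nonneg
    by (intro sum_mono mult_left_le) auto
  with sum_pair_weight BISO_nonneg[OF BISO, of 0 0] out_alph_memI
  show "eta_bound l W \<le> 1"
    by simp
qed

lemma out_dist_pair:
  fixes R :: "nat \<Rightarrow> real"
  assumes R: "R 1 = 1 - R 0" and y: "y \<in> {1..int l}"
  shows "out_dist W R y = pair_weight W y * bconv (R 0) (crossover W y)"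
    "out_dist W R (- y) = pair_weight W y * (1 - bconv (R 0) (crossover W y))"
proof -
  have "W 1 y = W 0 (- y)" "W 1 (- y) = W 0 y"
    using BISO_symmetric[OF BISO] out_alph_memI y by auto
  then have out: "out_dist W R y = R 0 * W 0 y + (1 - R 0) * W 0 (- y)"
    "out_dist W R (- y) = R 0 * W 0 (- y) + (1 - R 0) * W 0 y"
    unfolding out_dist_binary R by simp_all
  have W0: "0 \<le> W 0 y" "0 \<le> W 0 (- y)"
    using BISO_nonneg[OF BISO, of 0] out_alph_memI(2,3)[OF y] by auto
  have "out_dist W R y = pair_weight W y * bconv (R 0) (crossover W y)
      \<and> out_dist W R (- y) = pair_weight W y * (1 - bconv (R 0) (crossover W y))"
  proof (cases "pair_weight W y = 0")
    case True
    with W0 show ?thesis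
      unfolding out by (simp add: pair_weight_def add_nonneg_eq_0_iff)
  next
    case False
    then have W0_eq: "W 0 (- y) = pair_weight W y * crossover W y"
      "W 0 y = pair_weight W y * (1 - crossover W y)"
      by (simp_all add: crossover_def pair_weight_def field_simps)
    show ?thesis
      unfolding out W0_eq by (simp add: bconv_def algebra_simps)
  qed
  then show "out_dist W R y = pair_weight W y * bconv (R 0) (crossover W y)"
    "out_dist W R (- y) = pair_weight W y * (1 - bconv (R 0) (crossover W y))"
    by simp_all
qed

lemma kl_out_dist:
  fixes P Q :: "nat \<Rightarrow> real"
  assumes P: "P 1 = 1 - P 0" and Q: "Q 1 = 1 - Q 0"
  shows "kl (out_alph l) (out_dist W P) (out_dist W Q)
    = (\<Sum>y\<in>{1..int l}. pair_weight W y
         * bin_kl (bconv (P 0) (crossover W y)) (bconv (Q 0) (crossover W y))) / ln 2"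
proof -
  let ?f = "\<lambda>y. if out_dist W P y = 0 then 0
      else out_dist W P y * log 2 (out_dist W P y / out_dist W Q y)"
  have "W 1 0 = W 0 0"
    using BISO_symmetric[OF BISO] out_alph_memI by simp
  then have "out_dist W P 0 = out_dist W Q 0"
    unfolding out_dist_binary P Q by (simp flip: distrib_right)
  then have zero: "?f 0 = 0"
    by simp
  have pair: "?f y + ?f (- y) = pair_weight W y
      * bin_kl (bconv (P 0) (crossover W y)) (bconv (Q 0) (crossover W y)) / ln 2"
    if y: "y \<in> {1..int l}" for y
  proof (cases "pair_weight W y = 0")
    case False
    then have w: "0 < pair_weight W y"
      using pair_weight_nonneg[OF y] by simp
    have cancel: "(pair_weight W y * a) / (pair_weight W y * b) = a / b" for a b
      using w by simp
    show ?thesis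
      unfolding out_dist_pair[OF P y] out_dist_pair[OF Q y] cancel bin_kl_def log_def
      using w by (simp add: field_simps)
  qed (simp add: out_dist_pair[OF P y] out_dist_pair[OF Q y])
  show ?thesis
    unfolding kl_def sum_out_alph zero using pair by (simp add: sum_divide_distrib)
qed

lemma kl_out_dist_le_eta_bound:
  fixes P Q :: "nat \<Rightarrow> real"
  assumes P: "is_dist {0, 1} P" and Q: "is_dist {0, 1} Q" and abs_cont: "kl_finite {0, 1} P Q"
  shows "kl (out_alph l) (out_dist W P) (out_dist W Q) \<le> eta_bound l W * kl {0, 1} P Q"
proof -
  note p = is_dist_binaryD[OF P] and q = is_dist_binaryD[OF Q]
  have "(\<Sum>y\<in>{1..int l}. pair_weight W y
         * bin_kl (bconv (P 0) (crossover W y)) (bconv (Q 0) (crossover W y)))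
      \<le> (\<Sum>y\<in>{1..int l}. pair_weight W y * ((1 - 2 * crossover W y)\<^sup>2 * bin_kl (P 0) (Q 0)))"
    using abs_cont p q crossover_bounds pair_weight_nonneg
    by (intro sum_mono mult_left_mono bin_kl_bconv_le) (auto simp: kl_finite_def)
  also have "\<dots> = eta_bound l W * bin_kl (P 0) (Q 0)"
    by (simp add: eta_bound_def sum_distrib_right mult.assoc)
  finally show ?thesis
    unfolding kl_out_dist[OF p(1) q(1)] kl_binary[OF p(1) q(1)]
    by (simp add: divide_right_mono)
qed

lemma kl_ratio_le_eta_bound:
  fixes P Q :: "nat \<Rightarrow> real"
  assumes "is_dist {0, 1} P" "is_dist {0, 1} Q" "kl_finite {0, 1} P Q" "kl {0, 1} P Q > 0"
  shows "kl (out_alph l) (out_dist W P) (out_dist W Q) / kl {0, 1} P Q \<le> eta_bound l W"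
  using kl_out_dist_le_eta_bound[OF assms(1-3)] assms(4) by (simp add: pos_divide_le_eq)

lemma bdd_above_kl_ratios:
  "bdd_above {kl (out_alph l) (out_dist W P) (out_dist W Q) / kl {0, 1} P Q | P Q.
     is_dist {0, 1} P \<and> is_dist {0, 1} Q \<and> kl_finite {0, 1} P Q \<and> kl {0, 1} P Q > 0}"
  using kl_ratio_le_eta_bound by (intro bdd_aboveI) blast

lemma kl_ratio_le_eta_KL:
  fixes P Q :: "nat \<Rightarrow> real"
  assumes "is_dist {0, 1} P" "is_dist {0, 1} Q" "kl_finite {0, 1} P Q" "kl {0, 1} P Q > 0"
  shows "kl (out_alph l) (out_dist W P) (out_dist W Q) / kl {0, 1} P Q \<le> eta_KL l W"
  unfolding eta_KL_def using assms by (intro cSup_upper bdd_above_kl_ratios) blast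

lemma eta_KL_le_eta_bound: "eta_KL l W \<le> eta_bound l W"
  unfolding eta_KL_def
  using kl_point_mass_uniform kl_ratio_le_eta_bound by (intro cSup_least) fastforce+

lemma eta_KL_nonneg: "0 \<le> eta_KL l W"
proof -
  define P :: "nat \<Rightarrow> real" where "P = (\<lambda>x. if x = 0 then 1 else 0)"
  define Q :: "nat \<Rightarrow> real" where "Q = (\<lambda>x. 1 / 2)"
  note PQ = kl_point_mass_uniform[folded P_def Q_def]
  have half: "bconv (1/2) \<beta> = 1/2" for \<beta> :: real
    by (simp add: bconv_def field_simps)
  have "0 \<le> pair_weight W y * bin_kl (bconv 1 (crossover W y)) (bconv (1/2) (crossover W y))"
    if "y \<in> {1..int l}" for y
    unfolding half using bconv_bounds[of 1 "crossover W y"] crossover_bounds[OF that]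
      pair_weight_nonneg[OF that]
    by (auto intro!: mult_nonneg_nonneg bin_kl_nonneg)
  then have "0 \<le> kl (out_alph l) (out_dist W P) (out_dist W Q)"
    by (subst kl_out_dist) (auto simp: P_def Q_def intro!: divide_nonneg_pos sum_nonneg)
  also have "\<dots> = kl (out_alph l) (out_dist W P) (out_dist W Q) / kl {0, 1} P Q"
    using PQ by simp
  also have "\<dots> \<le> eta_KL l W"
    using PQ by (intro kl_ratio_le_eta_KL) auto
  finally show ?thesis .
qed

lemma kl_out_dist_le_eta_KL:
  fixes P Q :: "nat \<Rightarrow> real"
  assumes P: "is_dist {0, 1} P" and Q: "is_dist {0, 1} Q" and abs_cont: "kl_finite {0, 1} P Q"
  shows "kl (out_alph l) (out_dist W P) (out_dist W Q) \<le> eta_KL l W * kl {0, 1} P Q"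
proof (cases "kl {0, 1} P Q > 0")
  case True
  then show ?thesis
    using kl_ratio_le_eta_KL[OF P Q abs_cont] by (simp add: pos_divide_le_eq)
next
  case False
  with kl_binary_nonneg[OF P Q abs_cont] have "kl {0, 1} P Q = 0"
    by simp
  with kl_out_dist_le_eta_bound[OF P Q abs_cont] show ?thesis
    by simp
qed

end


section \<open>Mutual information and the upper bound\<close>

lemma mut_info_eq_sum_kl:
  fixes J :: "'a \<Rightarrow> 'b \<Rightarrow> real"
  assumes "finite B" and nonneg: "\<And>a b. a \<in> A \<Longrightarrow> b \<in> B \<Longrightarrow> 0 \<le> J a b"
  shows "mut_info A B J = (\<Sum>a\<in>A. (\<Sum>b\<in>B. J a b) *
           kl B (\<lambda>b. J a b / (\<Sum>b'\<in>B. J a b')) (\<lambda>b. \<Sum>a'\<in>A. J a' b))"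
  unfolding mut_info_def
proof (rule sum.cong[OF refl])
  fix a assume a: "a \<in> A"
  define Ja where "Ja = (\<Sum>b\<in>B. J a b)"
  define M where "M b = (\<Sum>a'\<in>A. J a' b)" for b
  have "(\<Sum>b\<in>B. if J a b = 0 then 0 else J a b * log 2 (J a b / (Ja * M b)))
      = Ja * kl B (\<lambda>b. J a b / Ja) M"
  proof (cases "Ja = 0")
    case True
    with a nonneg have "\<forall>b\<in>B. J a b = 0"
      using sum_nonneg_eq_0_iff[OF \<open>finite B\<close>, of "J a"] by (auto simp: Ja_def)
    with True show ?thesis
      by simp
  next
    case False
    then show ?thesis
      unfolding kl_def sum_distrib_left by (intro sum.cong) auto
  qed
  then show "(\<Sum>b\<in>B. if J a b = 0 then 0
          else J a b * log 2 (J a b / ((\<Sum>b'\<in>B. J a b') * (\<Sum>a'\<in>A. J a' b))))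
      = (\<Sum>b\<in>B. J a b) * kl B (\<lambda>b. J a b / (\<Sum>b'\<in>B. J a b')) (\<lambda>b. \<Sum>a'\<in>A. J a' b)"
    unfolding Ja_def M_def .
qed

lemma mut_info_through_channel:
  fixes J :: "nat \<Rightarrow> nat \<Rightarrow> real" and Y :: "int set"
  assumes "finite Y"
    and W_nonneg: "\<And>x y. x \<in> {0, 1} \<Longrightarrow> y \<in> Y \<Longrightarrow> 0 \<le> W x y"
    and W_sum: "\<And>x. x \<in> {0, 1} \<Longrightarrow> (\<Sum>y\<in>Y. W x y) = 1"
    and J_nonneg: "\<forall>u\<in>{0..<k}. \<forall>x\<in>{0, 1}. 0 \<le> J u x"
  shows "mut_info {0..<k} Y (\<lambda>u y. \<Sum>x\<in>{0, 1}. J u x * W x y)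
    = (\<Sum>u\<in>{0..<k}. (\<Sum>x\<in>{0, 1}. J u x)
        * kl Y (out_dist W (\<lambda>x. J u x / (\<Sum>x'\<in>{0, 1}. J u x')))
               (out_dist W (\<lambda>x. \<Sum>u'\<in>{0..<k}. J u' x)))"
proof -
  define JY where "JY u y = (\<Sum>x\<in>{0, 1}. J u x * W x y)" for u y
  have row_sum: "(\<Sum>y\<in>Y. JY u y) = (\<Sum>x\<in>{0, 1}. J u x)" for u
  proof -
    have "(\<Sum>y\<in>Y. JY u y) = (\<Sum>x\<in>{0, 1}. J u x * (\<Sum>y\<in>Y. W x y))"
      unfolding JY_def by (subst sum.swap) (simp add: sum_distrib_left)
    then show ?thesis
      using W_sum by simp
  qed
  have "mut_info {0..<k} Y JY = (\<Sum>u\<in>{0..<k}. (\<Sum>y\<in>Y. JY u y)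
      * kl Y (\<lambda>y. JY u y / (\<Sum>y'\<in>Y. JY u y')) (\<lambda>y. \<Sum>u'\<in>{0..<k}. JY u' y))"
    using J_nonneg W_nonneg by (intro mut_info_eq_sum_kl \<open>finite Y\<close>) (auto simp: JY_def)
  moreover have "(\<lambda>y. JY u y / (\<Sum>x\<in>{0, 1}. J u x))
      = out_dist W (\<lambda>x. J u x / (\<Sum>x'\<in>{0, 1}. J u x'))" for u
    by (auto simp: JY_def out_dist_def add_divide_distrib)
  moreover have "(\<lambda>y. \<Sum>u\<in>{0..<k}. JY u y) = out_dist W (\<lambda>x. \<Sum>u\<in>{0..<k}. J u x)"
    by (auto simp: JY_def out_dist_def sum.distrib sum_distrib_right)
  ultimately have "mut_info {0..<k} Y JY = (\<Sum>u\<in>{0..<k}. (\<Sum>x\<in>{0, 1}. J u x)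
      * kl Y (out_dist W (\<lambda>x. J u x / (\<Sum>x'\<in>{0, 1}. J u x')))
             (out_dist W (\<lambda>x. \<Sum>u'\<in>{0..<k}. J u' x)))"
    by (simp only: row_sum)
  then show ?thesis
    unfolding JY_def .
qed

lemma mut_info_binary_le_1:
  fixes J :: "nat \<Rightarrow> nat \<Rightarrow> real"
  assumes J_nonneg: "\<forall>u\<in>{0..<k}. \<forall>x\<in>{0, 1}. 0 \<le> J u x"
    and J_sum: "(\<Sum>u\<in>{0..<k}. \<Sum>x\<in>{0, 1}. J u x) = 1"
  shows "mut_info {0..<k} {0, 1} J \<le> 1"
proof -
  define PU where "PU u = (\<Sum>x\<in>{0, 1}. J u x)" for u
  define PX where "PX x = (\<Sum>u\<in>{0..<k}. J u x)" for x
  \<comment> \<open>\<open>I(U;X) \<le> H(X)\<close>, termwise\<close>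
  have term_le: "(if J u x = 0 then 0 else J u x * log 2 (J u x / (PU u * PX x)))
      \<le> - (J u x * log 2 (PX x))"
    if u: "u \<in> {0..<k}" and x: "x \<in> {0, 1}" for u x
  proof (cases "J u x = 0")
    case False
    with J_nonneg u x have J_pos: "0 < J u x"
      by force
    have "J u x \<le> PU u" "J u x \<le> PX x"
      unfolding PU_def PX_def using J_nonneg u x by (auto intro!: member_le_sum)
    with J_pos have "J u x / (PU u * PX x) \<le> 1 / PX x" "0 < PU u" "0 < PX x"
      by (auto simp: field_simps)
    with J_pos have "log 2 (J u x / (PU u * PX x)) \<le> log 2 (1 / PX x)"
      by (subst log_le_cancel_iff) auto
    also have "\<dots> = - log 2 (PX x)"
      using \<open>0 < PX x\<close> by (simp add: log_divide)
    finally have "J u x * log 2 (J u x / (PU u * PX x)) \<le> J u x * - log 2 (PX x)"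
      using J_pos by (intro mult_left_mono) auto
    with False show ?thesis
      by simp
  qed simp
  have "0 \<le> PX 0" "0 \<le> PX 1" "PX 0 + PX 1 = 1"
    using J_nonneg J_sum by (auto simp: PX_def sum.distrib intro!: sum_nonneg)
  then have PX: "0 \<le> PX 0" "PX 0 \<le> 1" "PX 1 = 1 - PX 0"
    by linarith+
  have "mut_info {0..<k} {0, 1} J \<le> (\<Sum>u\<in>{0..<k}. \<Sum>x\<in>{0, 1}. - (J u x * log 2 (PX x)))"
    unfolding mut_info_def PU_def[symmetric] PX_def[symmetric]
    using term_le by (intro sum_mono) auto
  also have "\<dots> = - (PX 0 * log 2 (PX 0) + PX 1 * log 2 (PX 1))"
    by (simp add: PX_def sum.distrib sum_distrib_right sum_negf sum_subtractf)
  also have "\<dots> = h2 (PX 0)"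
    unfolding h2_def PX(3) by auto
  also have "\<dots> \<le> 1"
    using PX by (intro h2_le_1)
  finally show ?thesis .
qed

lemma mut_info_le_eta_KL:
  fixes J :: "nat \<Rightarrow> nat \<Rightarrow> real"
  assumes BISO: "BISO l W" and J_nonneg: "\<forall>u\<in>{0..<k}. \<forall>x\<in>{0, 1}. 0 \<le> J u x"
    and J_sum: "(\<Sum>u\<in>{0..<k}. \<Sum>x\<in>{0, 1}. J u x) = 1"
  shows "mut_info {0..<k} (out_alph l) (\<lambda>u y. \<Sum>x\<in>{0, 1}. J u x * W x y)
    \<le> eta_KL l W * mut_info {0..<k} {0, 1} J"
proof -
  define PU where "PU u = (\<Sum>x\<in>{0, 1}. J u x)" for u
  define PX where "PX x = (\<Sum>u\<in>{0..<k}. J u x)" for x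
  define row where "row u x = J u x / PU u" for u x
  have PX: "is_dist {0, 1} PX"
    unfolding is_dist_def PX_def using J_nonneg J_sum
    by (auto intro!: sum_nonneg simp: sum.distrib)
  have "PU u * kl (out_alph l) (out_dist W (row u)) (out_dist W PX)
      \<le> PU u * (eta_KL l W * kl {0, 1} (row u) PX)" if u: "u \<in> {0..<k}" for u
  proof (cases "PU u = 0")
    case False
    with J_nonneg u have PU_pos: "0 < PU u"
      by (simp add: PU_def order_less_le add_nonneg_nonneg)
    have row: "is_dist {0, 1} (row u)"
      unfolding is_dist_def row_def using J_nonneg u PU_pos
      by (auto simp: PU_def add_divide_distrib[symmetric])
    have "kl_finite {0, 1} (row u) PX"
      unfolding kl_finite_def row_def PX_def
      using J_nonneg u sum_nonneg_eq_0_iff[of "{0..<k}" "\<lambda>u'. J u' _"] by auto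
    with BISO row PX PU_pos show ?thesis
      by (intro mult_left_mono kl_out_dist_le_eta_KL) auto
  qed simp
  then have "(\<Sum>u\<in>{0..<k}. PU u * kl (out_alph l) (out_dist W (row u)) (out_dist W PX))
      \<le> eta_KL l W * (\<Sum>u\<in>{0..<k}. PU u * kl {0, 1} (row u) PX)"
    unfolding sum_distrib_left by (intro sum_mono) (simp add: algebra_simps)
  moreover have "mut_info {0..<k} (out_alph l) (\<lambda>u y. \<Sum>x\<in>{0, 1}. J u x * W x y)
      = (\<Sum>u\<in>{0..<k}. PU u * kl (out_alph l) (out_dist W (row u)) (out_dist W PX))"
    unfolding PU_def row_def PX_def
    using BISO_D[OF BISO] J_nonneg by (intro mut_info_through_channel) (auto simp: out_alph_def)
  moreover have "mut_info {0..<k} {0, 1} J = (\<Sum>u\<in>{0..<k}. PU u * kl {0, 1} (row u) PX)"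
    unfolding PU_def row_def PX_def using J_nonneg by (intro mut_info_eq_sum_kl) auto
  ultimately show ?thesis
    by simp
qed

definition admissible_joint :: "nat \<Rightarrow> (nat \<Rightarrow> nat \<Rightarrow> real) \<Rightarrow> real \<Rightarrow> bool" where
  "admissible_joint k J t \<longleftrightarrow> (\<forall>u\<in>{0..<k}. \<forall>x\<in>{0, 1}. 0 \<le> J u x)
     \<and> (\<Sum>u\<in>{0..<k}. \<Sum>x\<in>{0, 1}. J u x) = 1 \<and> mut_info {0..<k} {0, 1} J \<le> t"

lemma F_I_eq_Sup_admissible:
  "F_I l W t = Sup {mut_info {0..<k} (out_alph l) (\<lambda>u y. \<Sum>x\<in>{0, 1}. J u x * W x y) | k J.
     admissible_joint k J t}"
  unfolding F_I_def admissible_joint_def ..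

lemma admissible_joint_constant: "0 \<le> t \<Longrightarrow> admissible_joint 1 (\<lambda>u x. if x = 0 then 1 else 0) t"
  by (simp add: admissible_joint_def mut_info_def)

lemma admissible_joint_mut_info_le:
  assumes BISO: "BISO l W" and J: "admissible_joint k J t"
  shows "mut_info {0..<k} (out_alph l) (\<lambda>u y. \<Sum>x\<in>{0, 1}. J u x * W x y) \<le> eta_KL l W * min t 1"
proof -
  have J_nonneg: "\<forall>u\<in>{0..<k}. \<forall>x\<in>{0, 1}. 0 \<le> J u x"
    and J_sum: "(\<Sum>u\<in>{0..<k}. \<Sum>x\<in>{0, 1}. J u x) = 1"
    using J by (simp_all add: admissible_joint_def)
  then have "mut_info {0..<k} {0, 1} J \<le> min t 1"
    using J mut_info_binary_le_1 by (simp add: admissible_joint_def)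
  with eta_KL_nonneg[OF BISO] have "eta_KL l W * mut_info {0..<k} {0, 1} J \<le> eta_KL l W * min t 1"
    by (rule mult_left_mono[rotated])
  with mut_info_le_eta_KL[OF BISO J_nonneg J_sum] show ?thesis
    by linarith
qed

lemma F_I_le:
  assumes "BISO l W" "0 \<le> t"
  shows "F_I l W t \<le> eta_KL l W * min t 1"
  unfolding F_I_eq_Sup_admissible
  using admissible_joint_mut_info_le[OF assms(1)] admissible_joint_constant[OF assms(2)]
  by (intro cSup_least) blast+

lemma le_F_I:
  assumes "BISO l W" "admissible_joint k J t"
  shows "mut_info {0..<k} (out_alph l) (\<lambda>u y. \<Sum>x\<in>{0, 1}. J u x * W x y) \<le> F_I l W t"
  unfolding F_I_eq_Sup_admissible
  using admissible_joint_mut_info_le[OF assms(1)] assms(2)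
  by (intro cSup_upper bdd_aboveI) blast+


section \<open>The lower bound\<close>

text \<open>Joint law of a uniform bit \<open>U\<close> and its image \<open>X\<close> under a BSC with crossover \<open>p\<close>.\<close>

definition bsc_joint :: "real \<Rightarrow> nat \<Rightarrow> nat \<Rightarrow> real" where
  "bsc_joint p u x = (if x = u then (1 - p) / 2 else p / 2)"

lemma sum_atLeast0_lessThan_2: "(\<Sum>u\<in>{0..<2::nat}. f u) = f 0 + f 1"
  by (simp add: numeral_2_eq_2)

lemma bsc_joint_marginals:
  "(\<Sum>u\<in>{0..<2}. bsc_joint p u 0) = 1/2" "(\<Sum>u\<in>{0..<2}. bsc_joint p u 1) = 1/2"
  "(\<Sum>x\<in>{0, 1}. bsc_joint p 0 x) = 1/2" "(\<Sum>x\<in>{0, 1}. bsc_joint p 1 x) = 1/2"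
  by (auto simp: bsc_joint_def numeral_2_eq_2 field_simps)

lemma bsc_joint_conditional:
  "(\<lambda>x. bsc_joint p 0 x / (\<Sum>x'\<in>{0, 1}. bsc_joint p 0 x')) = (\<lambda>x. 2 * bsc_joint p 0 x)"
  "(\<lambda>x. bsc_joint p 1 x / (\<Sum>x'\<in>{0, 1}. bsc_joint p 1 x')) = (\<lambda>x. 2 * bsc_joint p 1 x)"
  unfolding bsc_joint_marginals(3,4) by (simp_all add: mult.commute)

lemma bsc_joint_conditional_values:
  "2 * bsc_joint p 0 0 = 1 - p" "2 * bsc_joint p 0 1 = p"
  "2 * bsc_joint p 1 0 = p" "2 * bsc_joint p 1 1 = 1 - p"
  by (simp_all add: bsc_joint_def)

lemma admissible_bsc_joint:
  assumes "0 \<le> p" "p \<le> 1" "mut_info {0..<2} {0, 1} (bsc_joint p) \<le> t"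
  shows "admissible_joint 2 (bsc_joint p) t"
  using assms by (auto simp: admissible_joint_def bsc_joint_def numeral_2_eq_2)

lemma bin_kl_bconv_half:
  assumes "0 \<le> r" "r \<le> 1" "0 \<le> \<beta>" "\<beta> \<le> 1"
  shows "bin_kl (bconv r \<beta>) (bconv (1/2) \<beta>) = psi ((1 - 2 * r) * (1 - 2 * \<beta>))"
proof -
  have half: "bconv (1/2) \<beta> = 1/2"
    by (simp add: bconv_def field_simps)
  show ?thesis
    unfolding half using assms bconv_bounds[of r \<beta>] by (simp add: bin_kl_half one_minus_2_bconv)
qed

lemma mut_info_bsc_joint_input:
  assumes "0 \<le> p" "p \<le> 1"
  shows "mut_info {0..<2} {0, 1} (bsc_joint p) = 1 - h2 p"
proof -
  define PX where "PX x = (\<Sum>u\<in>{0..<2}. bsc_joint p u x)" for x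
  have PX: "PX 0 = 1/2" "PX 1 = 1/2"
    by (simp_all only: PX_def bsc_joint_marginals)
  have "kl {0, 1} (\<lambda>x. 2 * bsc_joint p 0 x) PX = bin_kl (1 - p) (1/2) / ln 2"
    "kl {0, 1} (\<lambda>x. 2 * bsc_joint p 1 x) PX = bin_kl p (1/2) / ln 2"
    by (subst kl_binary;
        simp add: PX[unfolded One_nat_def] bsc_joint_conditional_values[unfolded One_nat_def])+
  moreover have "bin_kl (1 - p) (1/2) = psi (1 - 2 * p)" "bin_kl p (1/2) = psi (1 - 2 * p)"
    using assms psi_minus[of "1 - 2 * p"] by (simp_all add: bin_kl_half)
  moreover have "mut_info {0..<2} {0, 1} (bsc_joint p)
      = 1/2 * kl {0, 1} (\<lambda>x. 2 * bsc_joint p 0 x) PX + 1/2 * kl {0, 1} (\<lambda>x. 2 * bsc_joint p 1 x) PX"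
    unfolding PX_def using assms
    by (subst mut_info_eq_sum_kl)
      (simp_all only: sum_atLeast0_lessThan_2 bsc_joint_conditional,
        simp_all only: bsc_joint_marginals(3,4), auto simp: bsc_joint_def)
  ultimately show ?thesis
    using assms by (simp add: h2_eq_psi)
qed

lemma mut_info_bsc_joint_output:
  assumes BISO: "BISO l W" and p: "0 \<le> p" "p \<le> 1"
  shows "mut_info {0..<2} (out_alph l) (\<lambda>u y. \<Sum>x\<in>{0, 1}. bsc_joint p u x * W x y)
    = (\<Sum>y\<in>{1..int l}. pair_weight W y * psi ((1 - 2 * p) * (1 - 2 * crossover W y))) / ln 2"
proof -
  define PX where "PX x = (\<Sum>u\<in>{0..<2}. bsc_joint p u x)" for x
  have PX: "PX 0 = 1/2" "PX 1 = 1/2"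
    by (simp_all only: PX_def bsc_joint_marginals)
  define S where
    "S = (\<Sum>y\<in>{1..int l}. pair_weight W y * psi ((1 - 2 * p) * (1 - 2 * crossover W y)))"
  have psi_flip: "psi ((2 * p - 1) * s) = psi ((1 - 2 * p) * s)" for s
    using psi_minus[of "(1 - 2 * p) * s"] by (simp add: algebra_simps)
  have "kl (out_alph l) (out_dist W (\<lambda>x. 2 * bsc_joint p 0 x)) (out_dist W PX) = S / ln 2"
    "kl (out_alph l) (out_dist W (\<lambda>x. 2 * bsc_joint p 1 x)) (out_dist W PX) = S / ln 2"
    unfolding S_def using p crossover_bounds[OF BISO]
    by (subst kl_out_dist[OF BISO];
        auto simp: PX[unfolded One_nat_def] bsc_joint_conditional_values[unfolded One_nat_def]
          bin_kl_bconv_half psi_flip intro!: sum.cong)+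
  moreover have "mut_info {0..<2} (out_alph l) (\<lambda>u y. \<Sum>x\<in>{0, 1}. bsc_joint p u x * W x y)
      = 1/2 * kl (out_alph l) (out_dist W (\<lambda>x. 2 * bsc_joint p 0 x)) (out_dist W PX)
        + 1/2 * kl (out_alph l) (out_dist W (\<lambda>x. 2 * bsc_joint p 1 x)) (out_dist W PX)"
    unfolding PX_def using BISO_D[OF BISO] p
    by (subst mut_info_through_channel)
      (simp_all only: sum_atLeast0_lessThan_2 bsc_joint_conditional,
        simp_all only: bsc_joint_marginals(3,4), auto simp: out_alph_def bsc_joint_def)
  ultimately show ?thesis
    by (simp add: S_def)
qed

text \<open>Jensen's inequality for the convex function \<open>u \<mapsto> psi (sqrt u)\<close> over the BSC mixture;
  the erasure output \<open>0\<close> enters with the value \<open>psi 0 = 0\<close>.\<close>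

lemma psi_sqrt_eta_bound_le:
  assumes BISO: "BISO l W" and q: "0 \<le> q" "q \<le> 1"
  shows "psi (sqrt (q\<^sup>2 * eta_bound l W))
    \<le> (\<Sum>y\<in>{1..int l}. pair_weight W y * psi (q * (1 - 2 * crossover W y)))"
proof -
  define S where "S = insert 0 {1..int l}"
  define a where "a y = (if y = 0 then W 0 0 else pair_weight W y)" for y
  define v where "v y = (if y = 0 then 0 else (1 - 2 * crossover W y)\<^sup>2 * q\<^sup>2)" for y
  have "v y \<in> {0..1}" if "y \<in> S" for y
  proof (cases "y = 0")
    case False
    with that have "\<bar>1 - 2 * crossover W y\<bar> \<le> 1"
      using abs_one_minus_2_crossover_le[OF BISO] by (auto simp: S_def)
    with q have "(1 - 2 * crossover W y)\<^sup>2 * q\<^sup>2 \<le> 1 * 1"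
      by (intro mult_mono) (auto simp: abs_square_le_1)
    with False show ?thesis
      by (simp add: v_def)
  qed (simp add: v_def)
  moreover have "(\<Sum>y\<in>S. a y) = 1"
    using sum_pair_weight[OF BISO] by (simp add: S_def a_def)
  moreover have "0 \<le> a y" if "y \<in> S" for y
    using that BISO_nonneg[OF BISO, of 0 0] out_alph_memI pair_weight_nonneg[OF BISO]
    by (auto simp: S_def a_def)
  ultimately have "psi (sqrt (\<Sum>y\<in>S. a y *\<^sub>R v y)) \<le> (\<Sum>y\<in>S. a y * psi (sqrt (v y)))"
    by (intro convex_on_sum[OF _ _ convex_on_psi_sqrt]) (auto simp: S_def)
  moreover have "(\<Sum>y\<in>S. a y *\<^sub>R v y) = q\<^sup>2 * eta_bound l W"
    by (simp add: S_def a_def v_def eta_bound_def sum_distrib_left algebra_simps)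
  moreover have "sqrt (v y) = \<bar>(1 - 2 * crossover W y) * q\<bar>" if "y \<in> {1..int l}" for y
    using that by (simp add: v_def real_sqrt_mult abs_mult)
  then have "(\<Sum>y\<in>S. a y * psi (sqrt (v y)))
      = (\<Sum>y\<in>{1..int l}. pair_weight W y * psi (q * (1 - 2 * crossover W y)))"
    by (simp add: S_def a_def v_def psi_abs mult.commute)
  ultimately show ?thesis
    by simp
qed

lemma psi_sqrt_eta_KL_le_mut_info_bsc_joint:
  assumes BISO: "BISO l W" and p: "0 \<le> p" "p \<le> 1/2"
  shows "psi (sqrt (eta_KL l W) * (1 - 2 * p)) / ln 2
    \<le> mut_info {0..<2} (out_alph l) (\<lambda>u y. \<Sum>x\<in>{0, 1}. bsc_joint p u x * W x y)"
proof -
  define q where "q = 1 - 2 * p"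
  have q: "0 \<le> q" "q \<le> 1" "q\<^sup>2 \<le> 1"
    using p by (auto simp: q_def abs_square_le_1)
  have \<eta>: "0 \<le> eta_KL l W" "eta_KL l W \<le> eta_bound l W" "eta_bound l W \<le> 1"
    using eta_KL_nonneg[OF BISO] eta_KL_le_eta_bound[OF BISO] eta_bound_bounds[OF BISO] by auto
  have "psi (sqrt (eta_KL l W) * q) = psi (sqrt (q\<^sup>2 * eta_KL l W))"
    using q by (simp add: real_sqrt_mult mult.commute)
  also have "\<dots> \<le> psi (sqrt (q\<^sup>2 * eta_bound l W))"
    using q \<eta> mult_le_one[of "q\<^sup>2" "eta_bound l W"]
    by (intro psi_mono real_sqrt_le_mono mult_left_mono) auto
  also have "\<dots> \<le> (\<Sum>y\<in>{1..int l}. pair_weight W y * psi (q * (1 - 2 * crossover W y)))"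
    by (rule psi_sqrt_eta_bound_le[OF BISO q(1,2)])
  finally show ?thesis
    using mut_info_bsc_joint_output[OF BISO] p by (simp add: q_def divide_right_mono)
qed

theorem mainTheorem12:
  fixes l :: nat and W :: "nat \<Rightarrow> int \<Rightarrow> real" and t :: real
  assumes "BISO l W" and "t \<ge> 0"
  shows "1 - h2 (bconv ((1 - sqrt (eta_KL l W)) / 2) (h2_inv (max (1 - t) 0))) \<le> F_I l W t
         \<and> F_I l W t \<le> eta_KL l W * min t 1"
proof
  define p where "p = h2_inv (max (1 - t) 0)"
  have p: "0 \<le> p" "p \<le> 1/2" "h2 p = max (1 - t) 0"
    using h2_inv_correct[of "max (1 - t) 0"] \<open>t \<ge> 0\<close> by (auto simp: p_def)
  have "0 \<le> eta_KL l W" "eta_KL l W \<le> 1"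
    using eta_KL_nonneg eta_KL_le_eta_bound eta_bound_bounds \<open>BISO l W\<close> by force+
  then have "1 - h2 (bconv ((1 - sqrt (eta_KL l W)) / 2) p)
      = psi (sqrt (eta_KL l W) * (1 - 2 * p)) / ln 2"
    using p by (intro one_minus_h2_bconv) auto
  also have "\<dots> \<le> mut_info {0..<2} (out_alph l) (\<lambda>u y. \<Sum>x\<in>{0, 1}. bsc_joint p u x * W x y)"
    by (rule psi_sqrt_eta_KL_le_mut_info_bsc_joint[OF \<open>BISO l W\<close> p(1,2)])
  also have "\<dots> \<le> F_I l W t"
    using p mut_info_bsc_joint_input[of p]
    by (intro le_F_I[OF \<open>BISO l W\<close>] admissible_bsc_joint) auto
  finally show "1 - h2 (bconv ((1 - sqrt (eta_KL l W)) / 2) (h2_inv (max (1 - t) 0))) \<le> F_I l W t"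
    unfolding p_def .
  show "F_I l W t \<le> eta_KL l W * min t 1"
    using assms by (rule F_I_le)
qed

end
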